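(* Let $A$ be a commutative quasi-ring and $I$ an ideal of $A$. Then congruence modulo $I$ is compatible with the addition and the multiplication of $A$, so that the quotient $A/I$ is a quasi-ring. Moreover, if $I\neq A$, then $A/I$ is not trivial, i.e. $1\not\equiv 0 \pmod I$.
   Context: A semiring is a set with two operations $+,\cdot$ such that $(A,+)$ is a commutative monoid with neutral element $0$, $(A,\cdot)$ is a monoid with unit $1$, multiplication distributes over addition, and $0$ is absorbing. A quasi-ring is a semiring whose unit $1$ is quasi-invertible for addition (there is $y$ with $1+y+1=1$, $y+1+y=y$). An ideal of a commutative quasi-ring $A$ is a subset $I$ containing $0$, stable under addition and under multiplication by elements of $A$. Congruence modulo $I$: for $a,b\in A$, $a\equiv b \pmod I$ if and only if $(a+I)\cap(b+I)\neq\emptyset$ and, for every $c\in I$ and every $r\in A$, one has $ac+r\in I \iff bc+r\in I$. $A/I$ denotes the set of congruence classes. *)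

theory Defs
  imports Main
begin

text \<open>Algebraic structures are given by a carrier set with explicit operations
  (no requirement that 0 and 1 differ).\<close>

definition semiring :: "'a set \<Rightarrow> ('a \<Rightarrow> 'a \<Rightarrow> 'a) \<Rightarrow> ('a \<Rightarrow> 'a \<Rightarrow> 'a) \<Rightarrow> 'a \<Rightarrow> 'a \<Rightarrow> bool" where
  "semiring A add mul zero one \<longleftrightarrow>
     zero \<in> A \<and> one \<in> A \<and>
     (\<forall>a\<in>A. \<forall>b\<in>A. add a b \<in> A) \<and>
     (\<forall>a\<in>A. \<forall>b\<in>A. mul a b \<in> A) \<and>
     (\<forall>a\<in>A. \<forall>b\<in>A. \<forall>c\<in>A. add (add a b) c = add a (add b c)) \<and>
     (\<forall>a\<in>A. \<forall>b\<in>A. add a b = add b a) \<and>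
     (\<forall>a\<in>A. add zero a = a) \<and>
     (\<forall>a\<in>A. \<forall>b\<in>A. \<forall>c\<in>A. mul (mul a b) c = mul a (mul b c)) \<and>
     (\<forall>a\<in>A. mul one a = a \<and> mul a one = a) \<and>
     (\<forall>a\<in>A. \<forall>b\<in>A. \<forall>c\<in>A. mul a (add b c) = add (mul a b) (mul a c)) \<and>
     (\<forall>a\<in>A. \<forall>b\<in>A. \<forall>c\<in>A. mul (add a b) c = add (mul a c) (mul b c)) \<and>
     (\<forall>a\<in>A. mul zero a = zero \<and> mul a zero = zero)"

definition quasi_ring :: "'a set \<Rightarrow> ('a \<Rightarrow> 'a \<Rightarrow> 'a) \<Rightarrow> ('a \<Rightarrow> 'a \<Rightarrow> 'a) \<Rightarrow> 'a \<Rightarrow> 'a \<Rightarrow> bool" where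
  "quasi_ring A add mul zero one \<longleftrightarrow>
     semiring A add mul zero one \<and>
     (\<exists>y\<in>A. add (add one y) one = one \<and> add (add y one) y = y)"

definition comm_quasi_ring :: "'a set \<Rightarrow> ('a \<Rightarrow> 'a \<Rightarrow> 'a) \<Rightarrow> ('a \<Rightarrow> 'a \<Rightarrow> 'a) \<Rightarrow> 'a \<Rightarrow> 'a \<Rightarrow> bool" where
  "comm_quasi_ring A add mul zero one \<longleftrightarrow>
     quasi_ring A add mul zero one \<and> (\<forall>a\<in>A. \<forall>b\<in>A. mul a b = mul b a)"

definition qr_ideal :: "'a set \<Rightarrow> ('a \<Rightarrow> 'a \<Rightarrow> 'a) \<Rightarrow> ('a \<Rightarrow> 'a \<Rightarrow> 'a) \<Rightarrow> 'a \<Rightarrow> 'a set \<Rightarrow> bool" where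
  "qr_ideal A add mul zero I \<longleftrightarrow>
     I \<subseteq> A \<and> zero \<in> I \<and>
     (\<forall>a\<in>I. \<forall>b\<in>I. add a b \<in> I) \<and>
     (\<forall>r\<in>A. \<forall>c\<in>I. mul r c \<in> I)"

definition cong_mod :: "'a set \<Rightarrow> ('a \<Rightarrow> 'a \<Rightarrow> 'a) \<Rightarrow> ('a \<Rightarrow> 'a \<Rightarrow> 'a) \<Rightarrow> 'a set \<Rightarrow> 'a \<Rightarrow> 'a \<Rightarrow> bool" where
  "cong_mod A add mul I a b \<longleftrightarrow>
     a \<in> A \<and> b \<in> A \<and>
     (\<exists>c\<in>I. \<exists>d\<in>I. add a c = add b d) \<and>
     (\<forall>c\<in>I. \<forall>r\<in>A. add (mul a c) r \<in> I \<longleftrightarrow> add (mul b c) r \<in> I)"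

definition cong_rel :: "'a set \<Rightarrow> ('a \<Rightarrow> 'a \<Rightarrow> 'a) \<Rightarrow> ('a \<Rightarrow> 'a \<Rightarrow> 'a) \<Rightarrow> 'a set \<Rightarrow> ('a \<times> 'a) set" where
  "cong_rel A add mul I = {(a, b). cong_mod A add mul I a b}"

text \<open>Operation induced on classes: the union of the classes of all x op y with
  x in X and y in Y (equals the class of x op y when the relation is compatible).\<close>
definition class_op :: "('a \<times> 'a) set \<Rightarrow> ('a \<Rightarrow> 'a \<Rightarrow> 'a) \<Rightarrow> 'a set \<Rightarrow> 'a set \<Rightarrow> 'a set" where
  "class_op R f X Y = (\<Union>x\<in>X. \<Union>y\<in>Y. R `` {f x y})"

end

theory Submission
  imports Defs
begin

text \<open>
  Congruence modulo an ideal I of a commutative quasi-ring A is the conjunction of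
  two relations: the Bourne relation (a + c = b + d for some c, d in I) and the
  requirement that a and b act alike on I, i.e. a*c + r and b*c + r lie in I
  simultaneously.  Each half is shown separately to be compatible with addition
  (which holds in every semiring) and with multiplication (which uses
  commutativity, since ideals are only closed under multiplication from one side).

  Independently, a general quotient construction shows that for any equivalence
  compatible with both operations of a semiring, the operation on classes is
  computed on representatives, so the quotient is again a semiring, and a
  quasi-ring if A is one.  Nontriviality holds because 1 congruent to 0 forces
  1 into I.
\<close>

definition compatible :: "('a \<times> 'a) set \<Rightarrow> ('a \<Rightarrow> 'a \<Rightarrow> 'a) \<Rightarrow> bool" where
  "compatible R f \<longleftrightarrow> (\<forall>a a' b b'. (a, a') \<in> R \<longrightarrow> (b, b') \<in> R \<longrightarrow> (f a b, f a' b') \<in> R)"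

lemma class_op_classes:
  assumes R: "equiv A R" and f: "compatible R f" and x: "x \<in> A" and y: "y \<in> A"
  shows "class_op R f (R `` {x}) (R `` {y}) = R `` {f x y}"
proof
  have "(x, x) \<in> R" "(y, y) \<in> R" using R x y by (auto simp: equiv_def refl_on_def)
  then show "R `` {f x y} \<subseteq> class_op R f (R `` {x}) (R `` {y})"
    unfolding class_op_def by blast
  show "class_op R f (R `` {x}) (R `` {y}) \<subseteq> R `` {f x y}"
  proof
    fix z assume "z \<in> class_op R f (R `` {x}) (R `` {y})"
    then obtain x' y' where "(x, x') \<in> R" "(y, y') \<in> R" "(f x' y', z) \<in> R"
      unfolding class_op_def by blast
    with f have "(f x y, f x' y') \<in> R" "(f x' y', z) \<in> R" unfolding compatible_def by blast+
    with R show "z \<in> R `` {f x y}" unfolding equiv_def trans_def by blast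
  qed
qed

locale semiring_struct =
  fixes A :: "'a set" and add mul :: "'a \<Rightarrow> 'a \<Rightarrow> 'a" and zero one :: 'a
  assumes semiring: "semiring A add mul zero one"
begin

lemma zero_closed: "zero \<in> A"
  and one_closed: "one \<in> A"
  and add_closed: "a \<in> A \<Longrightarrow> b \<in> A \<Longrightarrow> add a b \<in> A"
  and mul_closed: "a \<in> A \<Longrightarrow> b \<in> A \<Longrightarrow> mul a b \<in> A"
  and add_assoc: "a \<in> A \<Longrightarrow> b \<in> A \<Longrightarrow> c \<in> A \<Longrightarrow> add (add a b) c = add a (add b c)"
  and add_commute: "a \<in> A \<Longrightarrow> b \<in> A \<Longrightarrow> add a b = add b a"
  and add_zero: "a \<in> A \<Longrightarrow> add zero a = a"
  and mul_assoc: "a \<in> A \<Longrightarrow> b \<in> A \<Longrightarrow> c \<in> A \<Longrightarrow> mul (mul a b) c = mul a (mul b c)"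
  and mul_one: "a \<in> A \<Longrightarrow> mul one a = a" "a \<in> A \<Longrightarrow> mul a one = a"
  and distrib_left: "a \<in> A \<Longrightarrow> b \<in> A \<Longrightarrow> c \<in> A \<Longrightarrow> mul a (add b c) = add (mul a b) (mul a c)"
  and distrib_right: "a \<in> A \<Longrightarrow> b \<in> A \<Longrightarrow> c \<in> A \<Longrightarrow> mul (add a b) c = add (mul a c) (mul b c)"
  and mul_zero: "a \<in> A \<Longrightarrow> mul zero a = zero" "a \<in> A \<Longrightarrow> mul a zero = zero"
  using semiring unfolding semiring_def by auto

lemma add_left_commute: "a \<in> A \<Longrightarrow> b \<in> A \<Longrightarrow> c \<in> A \<Longrightarrow> add a (add b c) = add b (add a c)"
  by (metis add_assoc add_commute)

lemmas add_ac = add_assoc add_commute add_left_commute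

end

locale semiring_congruence = semiring_struct +
  fixes R :: "('a \<times> 'a) set"
  assumes equiv: "equiv A R"
    and add_compatible: "compatible R add"
    and mul_compatible: "compatible R mul"
begin

abbreviation qadd where "qadd \<equiv> class_op R add"
abbreviation qmul where "qmul \<equiv> class_op R mul"

lemma qadd_classes: "x \<in> A \<Longrightarrow> y \<in> A \<Longrightarrow> qadd (R `` {x}) (R `` {y}) = R `` {add x y}"
  and qmul_classes: "x \<in> A \<Longrightarrow> y \<in> A \<Longrightarrow> qmul (R `` {x}) (R `` {y}) = R `` {mul x y}"
  using class_op_classes[OF equiv] add_compatible mul_compatible by blast+

lemma class_cases: "X \<in> A // R \<Longrightarrow> (\<And>x. x \<in> A \<Longrightarrow> P (R `` {x})) \<Longrightarrow> P X"
  by (elim quotientE) auto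

lemma quotient_semiring: "semiring (A // R) qadd qmul (R `` {zero}) (R `` {one})"
  unfolding semiring_def
proof (intro conjI)
  note classes = qadd_classes qmul_classes
  note closed = add_closed mul_closed quotientI
  show "R `` {zero} \<in> A // R" "R `` {one} \<in> A // R"
    using zero_closed one_closed by (auto intro: quotientI)
  show "\<forall>a\<in>A // R. \<forall>b\<in>A // R. qadd a b \<in> A // R"
    "\<forall>a\<in>A // R. \<forall>b\<in>A // R. qmul a b \<in> A // R"
    by (intro ballI, elim class_cases, simp add: classes closed)+
  show "\<forall>a\<in>A // R. \<forall>b\<in>A // R. \<forall>c\<in>A // R. qadd (qadd a b) c = qadd a (qadd b c)"
    "\<forall>a\<in>A // R. \<forall>b\<in>A // R. \<forall>c\<in>A // R. qmul (qmul a b) c = qmul a (qmul b c)"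
    "\<forall>a\<in>A // R. \<forall>b\<in>A // R. \<forall>c\<in>A // R. qmul a (qadd b c) = qadd (qmul a b) (qmul a c)"
    "\<forall>a\<in>A // R. \<forall>b\<in>A // R. \<forall>c\<in>A // R. qmul (qadd a b) c = qadd (qmul a c) (qmul b c)"
    by (intro ballI, elim class_cases,
        simp add: classes closed add_assoc mul_assoc distrib_left distrib_right)+
  show "\<forall>a\<in>A // R. \<forall>b\<in>A // R. qadd a b = qadd b a"
    by (intro ballI, elim class_cases, simp add: classes add_commute)
  show "\<forall>a\<in>A // R. qadd (R `` {zero}) a = a"
    "\<forall>a\<in>A // R. qmul (R `` {one}) a = a \<and> qmul a (R `` {one}) = a"
    "\<forall>a\<in>A // R. qmul (R `` {zero}) a = R `` {zero} \<and> qmul a (R `` {zero}) = R `` {zero}"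
    by (intro ballI, elim class_cases,
        simp add: classes zero_closed one_closed add_zero mul_one mul_zero)+
qed

lemma quotient_quasi_ring:
  assumes "quasi_ring A add mul zero one"
  shows "quasi_ring (A // R) qadd qmul (R `` {zero}) (R `` {one})"
proof -
  from assms obtain y where y: "y \<in> A" "add (add one y) one = one" "add (add y one) y = y"
    unfolding quasi_ring_def by blast
  have "qadd (qadd (R `` {one}) (R `` {y})) (R `` {one}) = R `` {one}"
    "qadd (qadd (R `` {y}) (R `` {one})) (R `` {y}) = R `` {y}"
    using y by (simp_all add: qadd_classes one_closed add_closed)
  moreover have "R `` {y} \<in> A // R" using y(1) by (rule quotientI)
  ultimately show ?thesis unfolding quasi_ring_def using quotient_semiring by blast
qed

end

locale semiring_ideal = semiring_struct +
  fixes I :: "'a set"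
  assumes ideal: "qr_ideal A add mul zero I"
begin

lemma ideal_subset: "c \<in> I \<Longrightarrow> c \<in> A"
  and zero_in_ideal: "zero \<in> I"
  and ideal_add: "c \<in> I \<Longrightarrow> d \<in> I \<Longrightarrow> add c d \<in> I"
  and ideal_mul: "r \<in> A \<Longrightarrow> c \<in> I \<Longrightarrow> mul r c \<in> I"
  using ideal unfolding qr_ideal_def by auto

definition bourne :: "'a \<Rightarrow> 'a \<Rightarrow> bool" where
  "bourne a b \<longleftrightarrow> (\<exists>c\<in>I. \<exists>d\<in>I. add a c = add b d)"

definition acts_alike :: "'a \<Rightarrow> 'a \<Rightarrow> bool" where
  "acts_alike a b \<longleftrightarrow> (\<forall>c\<in>I. \<forall>r\<in>A. add (mul a c) r \<in> I \<longleftrightarrow> add (mul b c) r \<in> I)"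

lemma cong_mod_iff:
  "cong_mod A add mul I a b \<longleftrightarrow> a \<in> A \<and> b \<in> A \<and> bourne a b \<and> acts_alike a b"
  unfolding cong_mod_def bourne_def acts_alike_def by blast

lemma bourne_trans:
  assumes ab: "bourne a b" and be: "bourne b e" and A: "a \<in> A" "b \<in> A" "e \<in> A"
  shows "bourne a e"
proof -
  from ab be obtain c d c' d' where I: "c \<in> I" "d \<in> I" "c' \<in> I" "d' \<in> I"
    and eq: "add a c = add b d" "add b c' = add e d'"
    unfolding bourne_def by blast
  have "add a (add c c') = add (add a c) c'"
    using A I by (simp add: add_assoc ideal_subset)
  also have "\<dots> = add (add b c') d"
    using eq(1) A I by (simp add: add_ac ideal_subset)
  also have "\<dots> = add e (add d' d)"
    using eq(2) A I by (simp add: add_ac ideal_subset)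
  finally show ?thesis
    unfolding bourne_def using I ideal_add by blast
qed

lemma cong_equiv: "equiv A (cong_rel A add mul I)"
proof (rule equivI)
  show "cong_rel A add mul I \<subseteq> A \<times> A" "refl_on A (cong_rel A add mul I)"
    unfolding cong_rel_def cong_mod_iff refl_on_def bourne_def acts_alike_def
    using zero_in_ideal by auto
  show "sym (cong_rel A add mul I)"
    unfolding sym_def cong_rel_def cong_mod_iff bourne_def acts_alike_def by (auto, metis)
  show "trans (cong_rel A add mul I)"
    unfolding trans_def cong_rel_def cong_mod_iff
    using bourne_trans by (auto simp: acts_alike_def)
qed

lemma bourne_add:
  assumes "bourne a a'" "bourne b b'" and A: "a \<in> A" "a' \<in> A" "b \<in> A" "b' \<in> A"
  shows "bourne (add a b) (add a' b')"
proof -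
  from assms obtain c d c' d' where I: "c \<in> I" "d \<in> I" "c' \<in> I" "d' \<in> I"
    and eq: "add a c = add a' d" "add b c' = add b' d'"
    unfolding bourne_def by blast
  have "add (add a b) (add c c') = add (add a c) (add b c')"
    using A I by (simp add: add_ac add_closed ideal_subset)
  also have "\<dots> = add (add a' b') (add d d')"
    using eq A I by (simp add: add_ac add_closed ideal_subset)
  finally show ?thesis
    unfolding bourne_def using I ideal_add by blast
qed

lemma acts_alike_add:
  assumes aa: "acts_alike a a'" and bb: "acts_alike b b'" and A: "a \<in> A" "a' \<in> A" "b \<in> A" "b' \<in> A"
  shows "acts_alike (add a b) (add a' b')"
  unfolding acts_alike_def
proof (intro ballI)
  fix x r assume x: "x \<in> I" and r: "r \<in> A"
  then have m: "mul a x \<in> A" "mul a' x \<in> A" "mul b x \<in> A" "mul b' x \<in> A"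
    using A mul_closed ideal_subset by auto
  have "add (mul (add a b) x) r \<in> I \<longleftrightarrow> add (mul a x) (add (mul b x) r) \<in> I"
    using A x r m by (simp add: distrib_right add_assoc ideal_subset)
  also have "\<dots> \<longleftrightarrow> add (mul b x) (add (mul a' x) r) \<in> I"
    using aa x r m by (simp add: acts_alike_def add_closed add_left_commute)
  also have "\<dots> \<longleftrightarrow> add (mul b' x) (add (mul a' x) r) \<in> I"
    using bb x r m add_closed unfolding acts_alike_def by blast
  also have "add (mul b' x) (add (mul a' x) r) = add (mul (add a' b') x) r"
    using A x r m by (simp add: distrib_right add_ac ideal_subset)
  finally show "add (mul (add a b) x) r \<in> I \<longleftrightarrow> add (mul (add a' b') x) r \<in> I" .
qed

lemma cong_add:
  "cong_mod A add mul I a a' \<Longrightarrow> cong_mod A add mul I b b' \<Longrightarrow>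
    cong_mod A add mul I (add a b) (add a' b')"
  by (simp add: cong_mod_iff add_closed bourne_add acts_alike_add)

text \<open>If 1 is congruent to 0, then 1 + c lies in I for some c in I, and acting
  like 0 on c forces 1 itself into I; hence I is all of A.\<close>
lemma one_cong_zero_imp_ideal_full:
  assumes "cong_mod A add mul I one zero"
  shows "I = A"
proof -
  from assms obtain c d where I: "c \<in> I" "d \<in> I" and eq: "add one c = add zero d"
    and act: "acts_alike one zero"
    unfolding cong_mod_iff bourne_def by blast
  have "add (mul one c) one = d"
    using eq I one_closed by (simp add: mul_one add_zero add_commute ideal_subset)
  then have "add (mul zero c) one \<in> I"
    using act I \<open>d \<in> I\<close> one_closed unfolding acts_alike_def by metis
  then have "one \<in> I"
    using I one_closed by (simp add: mul_zero add_zero ideal_subset)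
  then have "A \<subseteq> I"
    using ideal_mul mul_one by (metis subsetI)
  then show ?thesis using ideal_subset by blast
qed

end

text \<open>Compatibility with multiplication needs commutativity: the ideal is only
  assumed closed under multiplication from the left.\<close>
locale comm_semiring_ideal = semiring_ideal +
  assumes mul_commute: "a \<in> A \<Longrightarrow> b \<in> A \<Longrightarrow> mul a b = mul b a"
begin

lemma mul_left_commute: "a \<in> A \<Longrightarrow> b \<in> A \<Longrightarrow> c \<in> A \<Longrightarrow> mul a (mul b c) = mul b (mul a c)"
  by (metis mul_assoc mul_commute)

lemma bourne_mul:
  assumes "bourne a a'" "bourne b b'" and A: "a \<in> A" "a' \<in> A" "b \<in> A" "b' \<in> A"
  shows "bourne (mul a b) (mul a' b')"
proof -
  from assms obtain c d c' d' where I: "c \<in> I" "d \<in> I" "c' \<in> I" "d' \<in> I"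
    and eq: "add a c = add a' d" "add b c' = add b' d'"
    unfolding bourne_def by blast
  note closed = A I[THEN ideal_subset] mul_closed add_closed
  have "add (mul a b) (add (mul a c') (mul c b')) = add (mul a (add b c')) (mul c b')"
    using closed by (simp add: distrib_left add_assoc)
  also have "\<dots> = add (mul (add a c) b') (mul a d')"
    using eq(2) closed by (simp add: distrib_left distrib_right add_ac)
  also have "\<dots> = add (mul a' b') (add (mul d b') (mul a d'))"
    using eq(1) closed by (simp add: distrib_right add_assoc)
  finally have "add (mul a b) (add (mul a c') (mul c b')) = add (mul a' b') (add (mul d b') (mul a d'))" .
  moreover have "add (mul a c') (mul c b') \<in> I" "add (mul d b') (mul a d') \<in> I"
    using I A ideal_mul ideal_add mul_commute ideal_subset by metis+
  ultimately show ?thesis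
    unfolding bourne_def by blast
qed

lemma acts_alike_mul:
  assumes aa: "acts_alike a a'" and bb: "acts_alike b b'" and A: "a \<in> A" "a' \<in> A" "b \<in> A" "b' \<in> A"
  shows "acts_alike (mul a b) (mul a' b')"
  unfolding acts_alike_def
proof (intro ballI)
  fix x r assume x: "x \<in> I" and r: "r \<in> A"
  then have I: "mul b x \<in> I" "mul a' x \<in> I" using A ideal_mul by auto
  have "add (mul (mul a b) x) r \<in> I \<longleftrightarrow> add (mul a' (mul b x)) r \<in> I"
    using aa I r A x by (simp add: acts_alike_def mul_assoc ideal_subset)
  also have "mul a' (mul b x) = mul b (mul a' x)"
    using A x by (simp add: mul_left_commute ideal_subset)
  also have "add (mul b (mul a' x)) r \<in> I \<longleftrightarrow> add (mul b' (mul a' x)) r \<in> I"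
    using bb I r unfolding acts_alike_def by blast
  also have "mul b' (mul a' x) = mul (mul a' b') x"
    using A x by (simp add: mul_assoc mul_left_commute ideal_subset)
  finally show "add (mul (mul a b) x) r \<in> I \<longleftrightarrow> add (mul (mul a' b') x) r \<in> I" .
qed

lemma cong_mul:
  "cong_mod A add mul I a a' \<Longrightarrow> cong_mod A add mul I b b' \<Longrightarrow>
    cong_mod A add mul I (mul a b) (mul a' b')"
  by (simp add: cong_mod_iff mul_closed bourne_mul acts_alike_mul)

lemma cong_semiring_congruence: "semiring_congruence A add mul zero one (cong_rel A add mul I)"
  using cong_equiv cong_add cong_mul
  by unfold_locales (auto simp: compatible_def cong_rel_def)

end

theorem proposition2p2:
  fixes A :: "'a set" and add mul :: "'a \<Rightarrow> 'a \<Rightarrow> 'a" and zero one :: 'a and I :: "'a set"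
  assumes "comm_quasi_ring A add mul zero one"
    and "qr_ideal A add mul zero I"
  shows "equiv A (cong_rel A add mul I)
     \<and> (\<forall>a a' b b'. cong_mod A add mul I a a' \<longrightarrow> cong_mod A add mul I b b' \<longrightarrow>
          cong_mod A add mul I (add a b) (add a' b') \<and> cong_mod A add mul I (mul a b) (mul a' b'))
     \<and> quasi_ring (A // cong_rel A add mul I)
          (class_op (cong_rel A add mul I) add) (class_op (cong_rel A add mul I) mul)
          (cong_rel A add mul I `` {zero}) (cong_rel A add mul I `` {one})
     \<and> (I \<noteq> A \<longrightarrow> \<not> cong_mod A add mul I one zero)"
proof -
  have quasi: "quasi_ring A add mul zero one" and semiring: "semiring A add mul zero one"
    using assms(1) by (simp_all add: comm_quasi_ring_def quasi_ring_def)
  interpret comm_semiring_ideal A add mul zero one I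
    using assms semiring by unfold_locales (simp_all add: comm_quasi_ring_def)
  interpret quotient: semiring_congruence A add mul zero one "cong_rel A add mul I"
    by (rule cong_semiring_congruence)
  show ?thesis
    using cong_equiv cong_add cong_mul quotient.quotient_quasi_ring[OF quasi]
      one_cong_zero_imp_ideal_full by blast
qed

end
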